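(* Let $(X_t)_{t\ge0}$ be a continuous-time Markov chain on a finite state space $\Sigma$ with mixing time $T$ and invariant distribution $\pi$, and let $h:\Sigma\to\mathbb R$ with $\mathrm{Var}_\pi(h)\le\sigma^2$ and $\pi(h)>0$. Then for every $t>0$ and every $\delta$ with $$0<\delta\le\frac{\sigma^2}{2\pi(h)\|h\|_\infty}\wedge1,$$ one has $$\mathbb P\Big[\int_0^th(X_s)\,ds-t\pi(h)\ge\delta t\pi(h)\Big]\le4\exp\Big\{-\Big\lfloor\frac t{k'(\delta)T}-1\Big\rfloor\frac{\delta^2\pi(h)^2}{6\sigma^2}\Big\},$$ where $k'(\delta)=-\log_2\big(\delta^2\pi(h)^2\pi_\star/(6\sigma^2)\big)$ and $\pi_\star=\min_x\pi(x)$.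
   Context: The mixing time of a continuous-time chain with generator $L$ is $T=\inf\{t\ge0:\max_{x}\|e^{tL}(x,\cdot)-\pi\|_{TV}\le1/4\}$. $\pi(h)=\sum_x\pi(x)h(x)$, $\mathrm{Var}_\pi h=\pi((h-\pi(h))^2)$, $\|h\|_\infty=\max_x|h(x)|$. *)

theory Defs
  imports "HOL-Probability.Probability"
begin

definition is_generator :: "('a::finite \<Rightarrow> 'a \<Rightarrow> real) \<Rightarrow> bool" where
  "is_generator L \<longleftrightarrow> (\<forall>x y. x \<noteq> y \<longrightarrow> 0 \<le> L x y) \<and> (\<forall>x. (\<Sum>y\<in>UNIV. L x y) = 0)"

fun mat_pow :: "('a::finite \<Rightarrow> 'a \<Rightarrow> real) \<Rightarrow> nat \<Rightarrow> 'a \<Rightarrow> 'a \<Rightarrow> real" where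
  "mat_pow L 0 = (\<lambda>x y. if x = y then 1 else 0)"
| "mat_pow L (Suc n) = (\<lambda>x y. \<Sum>z\<in>UNIV. mat_pow L n x z * L z y)"

definition heat :: "('a::finite \<Rightarrow> 'a \<Rightarrow> real) \<Rightarrow> real \<Rightarrow> 'a \<Rightarrow> 'a \<Rightarrow> real" where
  "heat L t x y = (\<Sum>n. t ^ n / fact n * mat_pow L n x y)"

definition is_distribution :: "('a::finite \<Rightarrow> real) \<Rightarrow> bool" where
  "is_distribution p \<longleftrightarrow> (\<forall>x. 0 \<le> p x) \<and> (\<Sum>x\<in>UNIV. p x) = 1"

definition is_invariant :: "('a::finite \<Rightarrow> 'a \<Rightarrow> real) \<Rightarrow> ('a \<Rightarrow> real) \<Rightarrow> bool" where
  "is_invariant L \<pi> \<longleftrightarrow> is_distribution \<pi> \<and> (\<forall>y. (\<Sum>x\<in>UNIV. \<pi> x * L x y) = 0)"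

definition tv_dist :: "('a::finite \<Rightarrow> real) \<Rightarrow> ('a \<Rightarrow> real) \<Rightarrow> real" where
  "tv_dist p q = (\<Sum>x\<in>UNIV. \<bar>p x - q x\<bar>) / 2"

definition mixing_set :: "('a::finite \<Rightarrow> 'a \<Rightarrow> real) \<Rightarrow> ('a \<Rightarrow> real) \<Rightarrow> real set" where
  "mixing_set L \<pi> = {t. 0 \<le> t \<and> (MAX x. tv_dist (heat L t x) \<pi>) \<le> 1/4}"

definition mixing_time :: "('a::finite \<Rightarrow> 'a \<Rightarrow> real) \<Rightarrow> ('a \<Rightarrow> real) \<Rightarrow> real" where
  "mixing_time L \<pi> = Inf (mixing_set L \<pi>)"

definition pi_mean :: "('a::finite \<Rightarrow> real) \<Rightarrow> ('a \<Rightarrow> real) \<Rightarrow> real" where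
  "pi_mean \<pi> h = (\<Sum>x\<in>UNIV. \<pi> x * h x)"

definition pi_var :: "('a::finite \<Rightarrow> real) \<Rightarrow> ('a \<Rightarrow> real) \<Rightarrow> real" where
  "pi_var \<pi> h = pi_mean \<pi> (\<lambda>x. (h x - pi_mean \<pi> h)^2)"

definition sup_norm :: "('a::finite \<Rightarrow> real) \<Rightarrow> real" where
  "sup_norm h = (MAX x. \<bar>h x\<bar>)"

definition pi_min :: "('a::finite \<Rightarrow> real) \<Rightarrow> real" where
  "pi_min \<pi> = (MIN x. \<pi> x)"

text \<open>X is a continuous-time Markov chain on M with generator L (any initial law):
  each X t is a random variable, paths are right-continuous (hence piecewise constant,
  since the state space is discrete), and the Markov property holds with transition
  function heat L.\<close>
definition is_ctmc :: "'w measure \<Rightarrow> (real \<Rightarrow> 'w \<Rightarrow> 'a::finite) \<Rightarrow> ('a \<Rightarrow> 'a \<Rightarrow> real) \<Rightarrow> bool" where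
  "is_ctmc M X L \<longleftrightarrow>
     prob_space M \<and> is_generator L \<and>
     (\<forall>t\<ge>0. X t \<in> measurable M (count_space UNIV)) \<and>
     (\<forall>\<omega>\<in>space M. \<forall>s\<ge>0. \<exists>\<epsilon>>0. \<forall>u. s \<le> u \<and> u < s + \<epsilon> \<longrightarrow> X u \<omega> = X s \<omega>) \<and>
     (\<forall>(F::real set) (z::real \<Rightarrow> 'a) s r x y.
        finite F \<longrightarrow> (\<forall>u\<in>F. 0 \<le> u \<and> u \<le> s) \<longrightarrow> 0 \<le> r \<longrightarrow>
        measure M {\<omega>\<in>space M. (\<forall>u\<in>F. X u \<omega> = z u) \<and> X s \<omega> = x \<and> X (s + r) \<omega> = y}
        = measure M {\<omega>\<in>space M. (\<forall>u\<in>F. X u \<omega> = z u) \<and> X s \<omega> = x} * heat L r x y)"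

end

theory Submission
  imports Defs
begin

text \<open>Split \<open>[0, t]\<close> into \<open>n = \<lfloor>t / (k' T)\<rfloor>\<close> steps of length \<open>b = t / n \<ge> l T'\<close>, where
  \<open>T'\<close> is a time in the mixing set close to \<open>T\<close> and \<open>l = \<lceil>k'\<rceil> - 1\<close>, so that
  \<open>2^-(l+1) \<le> \<delta>\<^sup>2 \<pi>(h)\<^sup>2 \<pi>\<^sub>\<star> / (6 \<sigma>\<^sup>2)\<close>.
  By Dobrushin's contraction the L1 distance of \<open>e^{bL}(x, \<cdot>)\<close> to \<open>\<pi>\<close> is at most \<open>2^-l\<close>
  from every state, so for the tilt \<open>f = exp (\<mu> (h - \<pi>(h)))\<close> with \<open>\<mu> = 2 \<delta> \<pi>(h) / (5 \<sigma>\<^sup>2)\<close>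
  one step of the chain multiplies the conditional expectation of \<open>f\<close> by at most
  \<open>\<pi>(f) + 2^-(l+1) sup f \<le> 1 + 49/40 a\<close>, where \<open>a = \<delta>\<^sup>2 \<pi>(h)\<^sup>2 / (6 \<sigma>\<^sup>2)\<close> and \<open>\<pi>(f)\<close>
  is controlled by the variance through a second-order expansion of \<open>exp\<close>.
  The Markov property turns this into a bound on the exponential moment of every skeleton sum
  \<open>\<Sum>\<^sub>j<n h(X(s + j b))\<close>. The occupation integral is a limit of averages of such shifted
  skeleton sums, so convexity of \<open>exp\<close> and dominated convergence transfer the bound to it,
  and Chernoff's inequality yields the tail estimate.\<close>

section \<open>The matrix exponential\<close>

lemma mat_pow_abs_le:
  fixes L :: "'a::finite \<Rightarrow> 'a \<Rightarrow> real"
  shows "\<bar>mat_pow L n x y\<bar> \<le> (\<Sum>z\<in>UNIV. \<Sum>w\<in>UNIV. \<bar>L z w\<bar>) ^ n"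
proof (induction n arbitrary: y)
  case 0
  then show ?case by simp
next
  case (Suc n)
  define C where "C = (\<Sum>z\<in>UNIV. \<Sum>w\<in>UNIV. \<bar>L z w\<bar>)"
  have "\<bar>mat_pow L (Suc n) x y\<bar> \<le> (\<Sum>z\<in>UNIV. \<bar>mat_pow L n x z\<bar> * \<bar>L z y\<bar>)"
    by (simp add: abs_mult[symmetric] sum_abs)
  also have "\<dots> \<le> (\<Sum>z\<in>UNIV. C ^ n * \<bar>L z y\<bar>)"
    by (intro sum_mono mult_right_mono) (auto simp: Suc[unfolded C_def[symmetric]])
  also have "\<dots> = C ^ n * (\<Sum>z\<in>UNIV. \<bar>L z y\<bar>)"
    by (simp add: sum_distrib_left)
  also have "\<dots> \<le> C ^ n * C"
  proof (rule mult_left_mono)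
    show "(\<Sum>z\<in>UNIV. \<bar>L z y\<bar>) \<le> C"
      unfolding C_def by (intro sum_mono) (rule member_le_sum, auto)
    show "0 \<le> C ^ n" unfolding C_def by (intro zero_le_power sum_nonneg) auto
  qed
  finally show ?case by (simp add: C_def mult.commute)
qed

lemma summable_heat_series:
  fixes L :: "'a::finite \<Rightarrow> 'a \<Rightarrow> real"
  shows "summable (\<lambda>n. t ^ n / fact n * mat_pow L n x y)"
proof (rule summable_comparison_test[OF _ summable_exp])
  define C where "C = (\<Sum>z\<in>UNIV. \<Sum>w\<in>UNIV. \<bar>L z w\<bar>)"
  have "norm (t ^ n / fact n * mat_pow L n x y) \<le> inverse (fact n) * (\<bar>t\<bar> * C) ^ n" for n
  proof -
    have "norm (t ^ n / fact n * mat_pow L n x y) = \<bar>t\<bar> ^ n / fact n * \<bar>mat_pow L n x y\<bar>"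
      by (simp add: abs_mult power_abs)
    also have "\<dots> \<le> \<bar>t\<bar> ^ n / fact n * C ^ n"
      unfolding C_def by (intro mult_left_mono mat_pow_abs_le) simp
    also have "\<dots> = inverse (fact n) * (\<bar>t\<bar> * C) ^ n"
      by (simp add: power_mult_distrib divide_inverse)
    finally show ?thesis .
  qed
  then show "\<exists>N. \<forall>n\<ge>N. norm (t ^ n / fact n * mat_pow L n x y) \<le> inverse (fact n) * (\<bar>t\<bar> * C) ^ n"
    by blast
qed

lemma mat_pow_Suc_0 [simp]: "mat_pow L (Suc 0) = L"
  by (simp add: fun_eq_iff if_distrib[of "\<lambda>c. c * _"] cong: if_cong)

lemma invariant_sum_mat_pow_Suc:
  fixes L :: "'a::finite \<Rightarrow> 'a \<Rightarrow> real"
  assumes "is_invariant L \<pi>"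
  shows "(\<Sum>x\<in>UNIV. \<pi> x * mat_pow L (Suc n) x y) = 0"
proof (induction n arbitrary: y)
  case 0
  then show ?case using assms by (simp only: mat_pow_Suc_0) (simp add: is_invariant_def)
next
  case (Suc n)
  have "(\<Sum>x\<in>UNIV. \<pi> x * mat_pow L (Suc (Suc n)) x y)
      = (\<Sum>x\<in>UNIV. \<Sum>z\<in>UNIV. \<pi> x * mat_pow L (Suc n) x z * L z y)"
    by (simp only: mat_pow.simps(2)[of L "Suc n"] sum_distrib_left mult.assoc)
  also have "\<dots> = (\<Sum>z\<in>UNIV. \<Sum>x\<in>UNIV. \<pi> x * mat_pow L (Suc n) x z * L z y)"
    by (rule sum.swap)
  also have "\<dots> = (\<Sum>z\<in>UNIV. (\<Sum>x\<in>UNIV. \<pi> x * mat_pow L (Suc n) x z) * L z y)"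
    by (simp only: sum_distrib_right)
  finally show ?case using Suc by simp
qed

lemma invariant_sum_heat:
  fixes L :: "'a::finite \<Rightarrow> 'a \<Rightarrow> real"
  assumes "is_invariant L \<pi>"
  shows "(\<Sum>x\<in>UNIV. \<pi> x * heat L t x y) = \<pi> y"
proof -
  have "(\<lambda>n. \<Sum>x\<in>UNIV. \<pi> x * (t ^ n / fact n * mat_pow L n x y)) sums
        (\<Sum>x\<in>UNIV. \<pi> x * heat L t x y)"
    unfolding heat_def by (intro sums_sum sums_mult summable_sums summable_heat_series)
  moreover have "(\<Sum>x\<in>UNIV. \<pi> x * (t ^ n / fact n * mat_pow L n x y)) = (if n = 0 then \<pi> y else 0)"
    for n
  proof (cases n)
    case 0
    then show ?thesis by (simp add: if_distrib cong: if_cong)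
  next
    case (Suc k)
    have "(\<Sum>x\<in>UNIV. \<pi> x * (t ^ n / fact n * mat_pow L n x y))
        = t ^ n / fact n * (\<Sum>x\<in>UNIV. \<pi> x * mat_pow L n x y)"
      by (simp add: sum_distrib_left mult_ac)
    then show ?thesis using invariant_sum_mat_pow_Suc[OF assms, of k y] Suc by simp
  qed
  ultimately have "(\<lambda>n. if n = 0 then \<pi> y else 0) sums (\<Sum>x\<in>UNIV. \<pi> x * heat L t x y)"
    by simp
  then show ?thesis
    using sums_single[of 0 "\<lambda>_. \<pi> y"] by (simp add: sums_unique2)
qed

section \<open>Contraction in total variation\<close>

lemma sum_max_zero_eq_half_sum_abs:
  fixes g :: "'a::finite \<Rightarrow> real"
  assumes "(\<Sum>y\<in>UNIV. g y) = 0"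
  shows "(\<Sum>y\<in>UNIV. max (g y) 0) = (\<Sum>y\<in>UNIV. \<bar>g y\<bar>) / 2"
proof -
  have g: "g y = max (g y) 0 - max (- g y) 0" and abs: "\<bar>g y\<bar> = max (g y) 0 + max (- g y) 0" for y
    by auto
  have "(\<Sum>y\<in>UNIV. max (g y) 0) - (\<Sum>y\<in>UNIV. max (- g y) 0) = 0"
    using assms by (subst (asm) g) (simp add: sum_subtractf)
  moreover have "(\<Sum>y\<in>UNIV. \<bar>g y\<bar>) = (\<Sum>y\<in>UNIV. max (g y) 0) + (\<Sum>y\<in>UNIV. max (- g y) 0)"
    by (subst abs) (simp add: sum.distrib)
  ultimately show ?thesis by simp
qed

lemma sum_mult_le_half_sum_abs:
  fixes g f :: "'a::finite \<Rightarrow> real"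
  assumes "(\<Sum>y\<in>UNIV. g y) = 0" and f_nonneg: "\<And>y. 0 \<le> f y" and f_le: "\<And>y. f y \<le> F"
  shows "(\<Sum>y\<in>UNIV. g y * f y) \<le> (\<Sum>y\<in>UNIV. \<bar>g y\<bar>) / 2 * F"
proof -
  have "g y * f y \<le> max (g y) 0 * F" for y
  proof (cases "0 \<le> g y")
    case True
    then show ?thesis using f_le[of y] by (simp add: mult_left_mono)
  next
    case False
    then have "g y * f y \<le> 0" using f_nonneg[of y] by (simp add: mult_nonpos_nonneg)
    then show ?thesis using False by simp
  qed
  then have "(\<Sum>y\<in>UNIV. g y * f y) \<le> (\<Sum>y\<in>UNIV. max (g y) 0) * F"
    by (simp add: sum_distrib_right sum_mono)
  then show ?thesis by (simp add: sum_max_zero_eq_half_sum_abs[OF assms(1)])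
qed

lemma sum_abs_kernel_le:
  fixes g :: "'a::finite \<Rightarrow> real" and R :: "'a \<Rightarrow> 'b::finite \<Rightarrow> real"
  assumes g: "(\<Sum>v\<in>UNIV. g v) = 0"
    and D: "\<And>v v'. (\<Sum>y\<in>UNIV. \<bar>R v y - R v' y\<bar>) \<le> D"
  shows "(\<Sum>y\<in>UNIV. \<bar>\<Sum>v\<in>UNIV. g v * R v y\<bar>) \<le> (\<Sum>v\<in>UNIV. \<bar>g v\<bar>) / 2 * D"
proof -
  define s where "s y = sgn (\<Sum>v\<in>UNIV. g v * R v y)" for y
  define S where "S v = (\<Sum>y\<in>UNIV. s y * R v y)" for v
  obtain v0 where v0: "S v0 = Min (range S)"
    using Min_in[of "range S"] by (metis UNIV_not_empty empty_is_image finite finite_imageI imageE)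
  have S_ge: "S v0 \<le> S v" for v
    unfolding v0 by (rule Min_le) auto
  have S_le: "S v - S v0 \<le> D" for v
  proof -
    have "S v - S v0 = (\<Sum>y\<in>UNIV. s y * (R v y - R v0 y))"
      by (simp add: S_def sum_subtractf right_diff_distrib)
    also have "\<dots> \<le> (\<Sum>y\<in>UNIV. \<bar>R v y - R v0 y\<bar>)"
    proof (intro sum_mono)
      fix y
      have "\<bar>s y\<bar> \<le> 1" by (simp add: s_def abs_sgn_eq)
      then have "\<bar>s y * (R v y - R v0 y)\<bar> \<le> \<bar>R v y - R v0 y\<bar>"
        by (simp add: abs_mult mult_left_le_one_le)
      then show "s y * (R v y - R v0 y) \<le> \<bar>R v y - R v0 y\<bar>" by linarith
    qed
    finally show ?thesis using D[of v v0] by linarith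
  qed
  have "(\<Sum>y\<in>UNIV. \<bar>\<Sum>v\<in>UNIV. g v * R v y\<bar>) = (\<Sum>y\<in>UNIV. s y * (\<Sum>v\<in>UNIV. g v * R v y))"
    unfolding s_def by (intro sum.cong refl) (auto simp: sgn_if)
  also have "\<dots> = (\<Sum>v\<in>UNIV. g v * S v)"
    unfolding S_def sum_distrib_left by (subst sum.swap) (simp add: mult_ac)
  also have "\<dots> = (\<Sum>v\<in>UNIV. g v * (S v - S v0))"
    using g by (simp add: right_diff_distrib sum_subtractf sum_distrib_right[symmetric])
  also have "\<dots> \<le> (\<Sum>v\<in>UNIV. \<bar>g v\<bar>) / 2 * D"
    by (rule sum_mult_le_half_sum_abs[OF g]) (use S_ge S_le in auto)
  finally show ?thesis .
qed

section \<open>The chain and its transition function\<close>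

lemma (in finite_measure) sum_measure_Collect_eq:
  fixes Y :: "'a \<Rightarrow> 'b::finite"
  assumes "\<And>y. {x\<in>space M. P x \<and> Y x = y} \<in> sets M"
  shows "(\<Sum>y\<in>UNIV. measure M {x\<in>space M. P x \<and> Y x = y}) = measure M {x\<in>space M. P x}"
proof -
  have "(\<Sum>y\<in>UNIV. measure M {x\<in>space M. P x \<and> Y x = y})
      = measure M (\<Union>y. {x\<in>space M. P x \<and> Y x = y})"
    by (rule finite_measure_finite_Union[symmetric]) (auto simp: assms disjoint_family_on_def)
  also have "(\<Union>y. {x\<in>space M. P x \<and> Y x = y}) = {x\<in>space M. P x}"
    by auto
  finally show ?thesis .
qed

lemma mixing_setD:
  assumes "T \<in> mixing_set L \<pi>"
  shows "0 \<le> T" and "(\<Sum>y\<in>UNIV. \<bar>heat L T v y - \<pi> y\<bar>) \<le> 1/2"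
proof -
  show "0 \<le> T" using assms by (simp add: mixing_set_def)
  have "tv_dist (heat L T v) \<pi> \<le> (MAX x. tv_dist (heat L T x) \<pi>)"
    by (rule Max_ge) auto
  also have "\<dots> \<le> 1/4" using assms by (simp add: mixing_set_def)
  finally show "(\<Sum>y\<in>UNIV. \<bar>heat L T v y - \<pi> y\<bar>) \<le> 1/2"
    by (simp add: tv_dist_def)
qed

locale ctmc =
  fixes M :: "'w measure" and X :: "real \<Rightarrow> 'w \<Rightarrow> 'a::finite" and L :: "'a \<Rightarrow> 'a \<Rightarrow> real"
  assumes is_ctmc: "is_ctmc M X L"
begin

sublocale prob_space M
  using is_ctmc by (simp add: is_ctmc_def)

lemma measurable_X: "0 \<le> t \<Longrightarrow> X t \<in> M \<rightarrow>\<^sub>M count_space UNIV"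
  using is_ctmc by (simp add: is_ctmc_def)

lemma right_continuous_path:
  "\<omega> \<in> space M \<Longrightarrow> 0 \<le> s \<Longrightarrow> \<exists>\<epsilon>>0. \<forall>u. s \<le> u \<and> u < s + \<epsilon> \<longrightarrow> X u \<omega> = X s \<omega>"
  using is_ctmc unfolding is_ctmc_def by blast

lemma markov_property:
  assumes "finite F" "\<forall>u\<in>F. 0 \<le> u \<and> u \<le> s" "0 \<le> r"
  shows "prob {\<omega>\<in>space M. (\<forall>u\<in>F. X u \<omega> = z u) \<and> X s \<omega> = x \<and> X (s + r) \<omega> = y}
       = prob {\<omega>\<in>space M. (\<forall>u\<in>F. X u \<omega> = z u) \<and> X s \<omega> = x} * heat L r x y"
  using assms is_ctmc unfolding is_ctmc_def by blast

lemma sets_X_eq: "0 \<le> t \<Longrightarrow> {\<omega>\<in>space M. X t \<omega> = x} \<in> events"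
  using measurable_sets[OF measurable_X, of t "{x}"] by (simp add: vimage_def Int_def conj_commute)

lemma sets_path_eq:
  assumes "finite F" "\<forall>u\<in>F. 0 \<le> u"
  shows "{\<omega>\<in>space M. \<forall>u\<in>F. X u \<omega> = z u} \<in> events"
  using assms by (intro sets.sets_Collect_finite_All sets_X_eq) auto

lemma borel_measurable_comp_X: "0 \<le> t \<Longrightarrow> (\<lambda>\<omega>. f (X t \<omega>) :: real) \<in> borel_measurable M"
  using measurable_compose[OF measurable_X, of t f borel] by simp

lemma prob_X_X:
  assumes "0 \<le> s" "0 \<le> r"
  shows "prob {\<omega>\<in>space M. X s \<omega> = x \<and> X (s + r) \<omega> = y} = prob {\<omega>\<in>space M. X s \<omega> = x} * heat L r x y"
  using markov_property[of "{}" s r] assms by simp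

text \<open>The semigroup properties of \<^const>\<open>heat\<close> (nonnegativity, unit row sums,
  Chapman-Kolmogorov) are read off the Markov property rather than the exponential series, and
  hence only at states that the chain charges.\<close>

definition reachable :: "real \<Rightarrow> 'a \<Rightarrow> bool" where
  "reachable s x \<longleftrightarrow> 0 \<le> s \<and> 0 < prob {\<omega>\<in>space M. X s \<omega> = x}"

lemma heat_nonneg:
  assumes "reachable s x" "0 \<le> r"
  shows "0 \<le> heat L r x y"
proof -
  have s: "0 \<le> s" using assms(1) by (simp add: reachable_def)
  have "0 \<le> prob {\<omega>\<in>space M. X s \<omega> = x} * heat L r x y"
    using measure_nonneg[of M "{\<omega>\<in>space M. X s \<omega> = x \<and> X (s + r) \<omega> = y}"]
    unfolding prob_X_X[OF s assms(2)] .
  then show ?thesis using assms by (simp add: reachable_def zero_le_mult_iff)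
qed

lemma sum_heat_eq_1:
  assumes "reachable s x" "0 \<le> r"
  shows "(\<Sum>y\<in>UNIV. heat L r x y) = 1"
proof -
  have s: "0 \<le> s" using assms by (simp add: reachable_def)
  have "prob {\<omega>\<in>space M. X s \<omega> = x} * (\<Sum>y\<in>UNIV. heat L r x y)
      = (\<Sum>y\<in>UNIV. prob {\<omega>\<in>space M. X s \<omega> = x \<and> X (s + r) \<omega> = y})"
    using prob_X_X[OF s \<open>0 \<le> r\<close>] by (simp add: sum_distrib_left)
  also have "\<dots> = prob {\<omega>\<in>space M. X s \<omega> = x}"
    using s assms(2) by (intro sum_measure_Collect_eq sets.sets_Collect_conj sets_X_eq) auto
  finally show ?thesis using assms by (simp add: reachable_def)
qed

lemma heat_add:
  assumes x: "reachable s x" and r: "0 \<le> r" "0 \<le> r'"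
  shows "heat L (r + r') x y = (\<Sum>v\<in>UNIV. heat L r x v * heat L r' v y)"
proof -
  let ?P = "prob {\<omega>\<in>space M. X s \<omega> = x}"
  have s: "0 \<le> s" using x by (simp add: reachable_def)
  have split: "prob {\<omega>\<in>space M. (X s \<omega> = x \<and> X (s + (r + r')) \<omega> = y) \<and> X (s + r) \<omega> = v}
      = ?P * (heat L r x v * heat L r' v y)" for v
  proof -
    have "prob {\<omega>\<in>space M. (X s \<omega> = x \<and> X (s + (r + r')) \<omega> = y) \<and> X (s + r) \<omega> = v}
        = prob {\<omega>\<in>space M. (\<forall>u\<in>{s}. X u \<omega> = x) \<and> X (s + r) \<omega> = v \<and> X (s + r + r') \<omega> = y}"
      by (rule arg_cong[where f = prob]) (auto simp: add.assoc)
    also have "\<dots> = prob {\<omega>\<in>space M. X s \<omega> = x \<and> X (s + r) \<omega> = v} * heat L r' v y"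
      using markov_property[of "{s}" "s + r" r' "\<lambda>_. x"] s r by simp
    finally show ?thesis using prob_X_X[OF s r(1)] by simp
  qed
  have "?P * heat L (r + r') x y = prob {\<omega>\<in>space M. X s \<omega> = x \<and> X (s + (r + r')) \<omega> = y}"
    using prob_X_X[of s "r + r'"] s r by simp
  also have "\<dots> = (\<Sum>v\<in>UNIV. prob {\<omega>\<in>space M. (X s \<omega> = x \<and> X (s + (r + r')) \<omega> = y) \<and> X (s + r) \<omega> = v})"
    using s r by (intro sum_measure_Collect_eq[symmetric] sets.sets_Collect_conj sets_X_eq) auto
  also have "\<dots> = ?P * (\<Sum>v\<in>UNIV. heat L r x v * heat L r' v y)"
    by (simp only: split sum_distrib_left)
  finally show ?thesis using x by (simp add: reachable_def)
qed

lemma reachable_heat_pos: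
  assumes "reachable s x" "0 \<le> r" "0 < heat L r x y"
  shows "reachable (s + r) y"
proof -
  have "0 < prob {\<omega>\<in>space M. X s \<omega> = x \<and> X (s + r) \<omega> = y}"
    using prob_X_X[of s r x y] assms by (simp add: reachable_def)
  also have "\<dots> \<le> prob {\<omega>\<in>space M. X (s + r) \<omega> = y}"
    using assms by (intro finite_measure_mono sets_X_eq) (auto simp: reachable_def)
  finally show ?thesis using assms by (simp add: reachable_def)
qed

end

locale ctmc_invariant = ctmc M X L
  for M :: "'w measure" and X :: "real \<Rightarrow> 'w \<Rightarrow> 'a::finite" and L +
  fixes \<pi> :: "'a \<Rightarrow> real"
  assumes invariant: "is_invariant L \<pi>"
begin

lemma sum_pi [simp]: "(\<Sum>x\<in>UNIV. \<pi> x) = 1"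
  using invariant by (simp add: is_invariant_def is_distribution_def)

lemma sum_abs_heat_diff_le_half_pow:
  assumes T: "T \<in> mixing_set L \<pi>" and "1 \<le> k" and w: "reachable s w"
  shows "(\<Sum>y\<in>UNIV. \<bar>heat L (real k * T) w y - \<pi> y\<bar>) \<le> (1/2) ^ k"
  using \<open>1 \<le> k\<close>
proof (induction k rule: nat_induct_at_least)
  case base
  then show ?case using mixing_setD(2)[OF T] by simp
next
  case (Suc k)
  have T0: "0 \<le> T" using mixing_setD(1)[OF T] .
  define g where "g v = heat L (real k * T) w v - \<pi> v" for v
  have g: "(\<Sum>v\<in>UNIV. g v) = 0"
    using sum_heat_eq_1[OF w, of "real k * T"] T0 by (simp add: g_def sum_subtractf)
  have "heat L (real (Suc k) * T) w y - \<pi> y = (\<Sum>v\<in>UNIV. g v * heat L T v y)" for y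
  proof -
    have "heat L (real (Suc k) * T) w y = (\<Sum>v\<in>UNIV. heat L (real k * T) w v * heat L T v y)"
      using heat_add[OF w, of "real k * T" T y] T0 by (simp add: algebra_simps)
    then show ?thesis
      using invariant_sum_heat[OF invariant, of T y] by (simp add: g_def left_diff_distrib sum_subtractf)
  qed
  then have "(\<Sum>y\<in>UNIV. \<bar>heat L (real (Suc k) * T) w y - \<pi> y\<bar>)
      = (\<Sum>y\<in>UNIV. \<bar>\<Sum>v\<in>UNIV. g v * heat L T v y\<bar>)"
    by simp
  also have "\<dots> \<le> (\<Sum>v\<in>UNIV. \<bar>g v\<bar>) / 2 * 1"
  proof (rule sum_abs_kernel_le[OF g])
    fix v v'
    have "(\<Sum>y\<in>UNIV. \<bar>heat L T v y - heat L T v' y\<bar>)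
        \<le> (\<Sum>y\<in>UNIV. \<bar>heat L T v y - \<pi> y\<bar>) + (\<Sum>y\<in>UNIV. \<bar>heat L T v' y - \<pi> y\<bar>)"
      unfolding sum.distrib[symmetric] by (intro sum_mono) linarith
    then show "(\<Sum>y\<in>UNIV. \<bar>heat L T v y - heat L T v' y\<bar>) \<le> 1"
      using mixing_setD(2)[OF T, of v] mixing_setD(2)[OF T, of v'] by linarith
  qed
  also have "\<dots> \<le> (1/2) ^ Suc k"
    using Suc.IH by (simp add: g_def)
  finally show ?case .
qed

lemma sum_heat_mult_le_at_mixing_multiple:
  assumes T: "T \<in> mixing_set L \<pi>" and "1 \<le> l" and w: "reachable s w"
    and f: "\<And>y. 0 \<le> f y" "\<And>y. f y \<le> F"
  shows "(\<Sum>y\<in>UNIV. heat L (real l * T) w y * f y) \<le> (\<Sum>y\<in>UNIV. \<pi> y * f y) + (1/2) ^ (l + 1) * F"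
proof -
  have lT: "0 \<le> real l * T" using mixing_setD(1)[OF T] by simp
  have "(\<Sum>y\<in>UNIV. (heat L (real l * T) w y - \<pi> y) * f y)
      \<le> (\<Sum>y\<in>UNIV. \<bar>heat L (real l * T) w y - \<pi> y\<bar>) / 2 * F"
    using sum_heat_eq_1[OF w lT] by (intro sum_mult_le_half_sum_abs f) (simp add: sum_subtractf)
  also have "\<dots> \<le> (1/2) ^ l / 2 * F"
    using sum_abs_heat_diff_le_half_pow[OF T \<open>1 \<le> l\<close> w] f[of undefined]
    by (intro mult_right_mono divide_right_mono) auto
  finally show ?thesis by (simp add: left_diff_distrib sum_subtractf)
qed

lemma sum_heat_mult_le:
  assumes T: "T \<in> mixing_set L \<pi>" and "1 \<le> l" "real l * T \<le> b" and z: "reachable s z"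
    and f: "\<And>y. 0 \<le> f y" "\<And>y. f y \<le> F"
  shows "(\<Sum>y\<in>UNIV. heat L b z y * f y) \<le> (\<Sum>y\<in>UNIV. \<pi> y * f y) + (1/2) ^ (l + 1) * F"
proof -
  define r where "r = b - real l * T"
  define B where "B = (\<Sum>y\<in>UNIV. \<pi> y * f y) + (1/2) ^ (l + 1) * F"
  have r: "0 \<le> r" using assms by (simp add: r_def)
  have lT: "0 \<le> real l * T" using mixing_setD(1)[OF T] by simp
  have "(\<Sum>y\<in>UNIV. heat L b z y * f y)
      = (\<Sum>y\<in>UNIV. \<Sum>w\<in>UNIV. heat L r z w * (heat L (real l * T) w y * f y))"
    using heat_add[OF z r lT] by (simp add: r_def sum_distrib_right mult.assoc)
  also have "\<dots> = (\<Sum>w\<in>UNIV. \<Sum>y\<in>UNIV. heat L r z w * (heat L (real l * T) w y * f y))"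
    by (rule sum.swap)
  also have "\<dots> = (\<Sum>w\<in>UNIV. heat L r z w * (\<Sum>y\<in>UNIV. heat L (real l * T) w y * f y))"
    by (simp add: sum_distrib_left)
  also have "\<dots> \<le> (\<Sum>w\<in>UNIV. heat L r z w * B)"
  proof (intro sum_mono)
    fix w
    show "heat L r z w * (\<Sum>y\<in>UNIV. heat L (real l * T) w y * f y) \<le> heat L r z w * B"
    proof (cases "heat L r z w = 0")
      case False
      then have "reachable (s + r) w"
        using heat_nonneg[OF z r, of w] by (intro reachable_heat_pos[OF z r]) simp
      then show ?thesis unfolding B_def
        by (intro mult_left_mono sum_heat_mult_le_at_mixing_multiple[OF T \<open>1 \<le> l\<close>] f
            heat_nonneg[OF z r])
    qed simp
  qed
  also have "\<dots> = B"
    using sum_heat_eq_1[OF z r] by (simp add: sum_distrib_right[symmetric])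
  finally show ?thesis unfolding B_def .
qed

end

section \<open>Exponential moments along a skeleton\<close>

lemma prod_eq_sum_PiE_of_bool:
  fixes w :: "'b \<Rightarrow> 'a::finite" and \<phi> :: "'a \<Rightarrow> real"
  assumes "finite G"
  shows "(\<Prod>u\<in>G. \<phi> (w u))
       = (\<Sum>z\<in>PiE G (\<lambda>_. UNIV). of_bool (\<forall>u\<in>G. w u = z u) * (\<Prod>u\<in>G. \<phi> (z u)))"
proof -
  have "(\<forall>u\<in>G. w u = z u) \<longleftrightarrow> z = restrict w G" if "z \<in> PiE G (\<lambda>_. UNIV)" for z
    using that by (auto simp: fun_eq_iff PiE_def extensional_def)
  then have "(\<Sum>z\<in>PiE G (\<lambda>_. UNIV). of_bool (\<forall>u\<in>G. w u = z u) * (\<Prod>u\<in>G. \<phi> (z u)))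
      = (\<Sum>z\<in>PiE G (\<lambda>_. UNIV). if z = restrict w G then (\<Prod>u\<in>G. \<phi> (z u)) else 0)"
    by (intro sum.cong) auto
  also have "\<dots> = (\<Prod>u\<in>G. \<phi> (restrict w G u))"
    using assms by (simp add: finite_PiE)
  also have "\<dots> = (\<Prod>u\<in>G. \<phi> (w u))"
    by (intro prod.cong) auto
  finally show ?thesis ..
qed

lemma sum_PiE_insert:
  fixes H :: "('b \<Rightarrow> 'a) \<Rightarrow> real"
  assumes "a \<notin> G"
  shows "(\<Sum>z\<in>PiE (insert a G) (\<lambda>_. UNIV). H z) = (\<Sum>g\<in>PiE G (\<lambda>_. UNIV). \<Sum>y\<in>UNIV. H (g(a := y)))"
proof -
  have "(\<Sum>z\<in>PiE (insert a G) (\<lambda>_. UNIV). H z)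
      = (\<Sum>(y, g)\<in>UNIV \<times> PiE G (\<lambda>_. UNIV). H (g(a := y)))"
    using sum.reindex[OF inj_combinator[OF assms], of H "\<lambda>_. UNIV"]
    by (simp add: PiE_insert_eq comp_def case_prod_unfold)
  also have "\<dots> = (\<Sum>y\<in>UNIV. \<Sum>g\<in>PiE G (\<lambda>_. UNIV). H (g(a := y)))"
    by (rule sum.cartesian_product[symmetric])
  also have "\<dots> = (\<Sum>g\<in>PiE G (\<lambda>_. UNIV). \<Sum>y\<in>UNIV. H (g(a := y)))"
    by (rule sum.swap)
  finally show ?thesis .
qed

definition grid :: "real \<Rightarrow> real \<Rightarrow> nat \<Rightarrow> real set" where
  "grid s b n = (\<lambda>j. s + real j * b) ` {..<n}"

lemma finite_grid [simp]: "finite (grid s b n)"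
  by (simp add: grid_def)

lemma grid_Suc: "grid s b (Suc n) = insert (s + real n * b) (grid s b n)"
  by (auto simp: grid_def lessThan_Suc)

lemma grid_nonneg: "0 \<le> s \<Longrightarrow> 0 \<le> b \<Longrightarrow> \<forall>u\<in>grid s b n. 0 \<le> u"
  by (auto simp: grid_def)

context ctmc
begin

definition path_prob :: "real set \<Rightarrow> (real \<Rightarrow> 'a) \<Rightarrow> real" where
  "path_prob G z = prob {\<omega>\<in>space M. \<forall>u\<in>G. X u \<omega> = z u}"

lemma expectation_prod_eq_sum_path_prob:
  assumes G: "finite G" "\<forall>u\<in>G. 0 \<le> u"
  shows "expectation (\<lambda>\<omega>. \<Prod>u\<in>G. \<phi> (X u \<omega>))
       = (\<Sum>z\<in>PiE G (\<lambda>_. UNIV). path_prob G z * (\<Prod>u\<in>G. \<phi> (z u)))"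
proof -
  define A where "A z = {\<omega>\<in>space M. \<forall>u\<in>G. X u \<omega> = z u}" for z
  have A: "A z \<in> events" for z
    unfolding A_def using G by (rule sets_path_eq)
  have "(\<Prod>u\<in>G. \<phi> (X u \<omega>))
      = (\<Sum>z\<in>PiE G (\<lambda>_. UNIV). indicator (A z) \<omega> * (\<Prod>u\<in>G. \<phi> (z u)))"
    if "\<omega> \<in> space M" for \<omega>
    using prod_eq_sum_PiE_of_bool[OF G(1), of \<phi> "\<lambda>u. X u \<omega>"] that
    by (simp add: A_def indicator_def)
  then have "expectation (\<lambda>\<omega>. \<Prod>u\<in>G. \<phi> (X u \<omega>))
      = expectation (\<lambda>\<omega>. \<Sum>z\<in>PiE G (\<lambda>_. UNIV). indicator (A z) \<omega> * (\<Prod>u\<in>G. \<phi> (z u)))"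
    by (intro Bochner_Integration.integral_cong refl)
  also have "\<dots> = (\<Sum>z\<in>PiE G (\<lambda>_. UNIV). expectation (\<lambda>\<omega>. indicator (A z) \<omega> * (\<Prod>u\<in>G. \<phi> (z u))))"
    by (rule Bochner_Integration.integral_sum) (use A in \<open>auto simp: emeasure_eq_measure\<close>)
  also have "\<dots> = (\<Sum>z\<in>PiE G (\<lambda>_. UNIV). path_prob G z * (\<Prod>u\<in>G. \<phi> (z u)))"
    using A by (simp add: path_prob_def A_def Int_absorb2 sets.sets_into_space)
  finally show ?thesis .
qed

lemma sum_path_prob_eq_1:
  assumes "finite G" "\<forall>u\<in>G. 0 \<le> u"
  shows "(\<Sum>z\<in>PiE G (\<lambda>_. UNIV). path_prob G z) = 1"
  using expectation_prod_eq_sum_path_prob[OF assms, of "\<lambda>_. 1"] by (simp add: prob_space)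

lemma path_prob_insert:
  assumes G: "finite G" "l \<in> G" "\<forall>u\<in>G. 0 \<le> u \<and> u \<le> l" and "0 < b"
  shows "path_prob (insert (l + b) G) (g(l + b := y)) = path_prob G g * heat L b (g l) y"
proof -
  have "l + b \<notin> G" using G \<open>0 < b\<close> by force
  then have "\<forall>u\<in>G. (g(l + b := y)) u = g u"
    by auto
  then have new: "(\<forall>u\<in>insert (l + b) G. X u \<omega> = (g(l + b := y)) u)
      \<longleftrightarrow> X (l + b) \<omega> = y \<and> (\<forall>u\<in>G. X u \<omega> = g u)" for \<omega>
    by simp
  have old: "(\<forall>u\<in>G. X u \<omega> = g u) \<longleftrightarrow> (\<forall>u\<in>G - {l}. X u \<omega> = g u) \<and> X l \<omega> = g l" for \<omega>
    using G(2) by blast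
  have "{\<omega>\<in>space M. \<forall>u\<in>insert (l + b) G. X u \<omega> = (g(l + b := y)) u}
      = {\<omega>\<in>space M. (\<forall>u\<in>G - {l}. X u \<omega> = g u) \<and> X l \<omega> = g l \<and> X (l + b) \<omega> = y}"
    and "{\<omega>\<in>space M. \<forall>u\<in>G. X u \<omega> = g u}
      = {\<omega>\<in>space M. (\<forall>u\<in>G - {l}. X u \<omega> = g u) \<and> X l \<omega> = g l}"
    unfolding new old by blast+
  then show ?thesis
    unfolding path_prob_def by (simp only:) (rule markov_property, use G \<open>0 < b\<close> in auto)
qed

lemma reachable_of_path_prob_pos:
  assumes "0 < path_prob G g" "l \<in> G" "0 \<le> l"
  shows "reachable l (g l)"
proof -
  have "path_prob G g \<le> prob {\<omega>\<in>space M. X l \<omega> = g l}"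
    unfolding path_prob_def using assms by (intro finite_measure_mono sets_X_eq) auto
  then show ?thesis using assms by (simp add: reachable_def)
qed

lemma sum_path_prob_insert_eq:
  assumes G: "finite G" "l \<in> G" "\<forall>u\<in>G. 0 \<le> u \<and> u \<le> l" and "0 < b"
  shows "(\<Sum>z\<in>PiE (insert (l + b) G) (\<lambda>_. UNIV).
            path_prob (insert (l + b) G) z * (\<Prod>u\<in>insert (l + b) G. f (z u)))
       = (\<Sum>g\<in>PiE G (\<lambda>_. UNIV).
            path_prob G g * (\<Prod>u\<in>G. f (g u)) * (\<Sum>y\<in>UNIV. heat L b (g l) y * f y))"
proof -
  have notin: "l + b \<notin> G" using G \<open>0 < b\<close> by force
  have "(\<Prod>u\<in>insert (l + b) G. f ((g(l + b := y)) u)) = f y * (\<Prod>u\<in>G. f (g u))" for g y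
  proof -
    have "(\<Prod>u\<in>G. f ((g(l + b := y)) u)) = (\<Prod>u\<in>G. f (g u))"
      using notin by (intro prod.cong) auto
    then show ?thesis using notin G(1) by simp
  qed
  then show ?thesis
    by (simp add: sum_PiE_insert[OF notin] path_prob_insert[OF assms] sum_distrib_left mult_ac)
qed

lemma sum_path_prob_grid_le:
  assumes "0 \<le> s" "0 < b" "1 \<le> n" and f: "\<And>y. 0 \<le> f y" "\<And>y. f y \<le> F" and "0 \<le> \<rho>"
    and step: "\<And>s' x. reachable s' x \<Longrightarrow> (\<Sum>y\<in>UNIV. heat L b x y * f y) \<le> \<rho>"
  shows "(\<Sum>z\<in>PiE (grid s b n) (\<lambda>_. UNIV). path_prob (grid s b n) z * (\<Prod>u\<in>grid s b n. f (z u)))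
       \<le> F * \<rho> ^ (n - 1)"
  using \<open>1 \<le> n\<close>
proof (induction n rule: nat_induct_at_least)
  case base
  have "grid s b 1 = {s}" by (simp add: grid_def lessThan_Suc)
  moreover have "(\<Sum>z\<in>PiE {s} (\<lambda>_. UNIV). path_prob {s} z * f (z s))
      \<le> (\<Sum>z\<in>PiE {s} (\<lambda>_. UNIV :: 'a set). path_prob {s} z * F)"
    by (intro sum_mono mult_left_mono f) (simp add: path_prob_def)
  ultimately show ?case
    using sum_path_prob_eq_1[of "{s}"] \<open>0 \<le> s\<close> by (simp add: sum_distrib_right[symmetric])
next
  case (Suc n)
  define G where "G = grid s b n"
  define l where "l = s + real (n - 1) * b"
  have "l \<in> G"
    unfolding G_def grid_def l_def by (rule image_eqI[of _ _ "n - 1"]) (use Suc.hyps in auto)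
  moreover have "0 \<le> u \<and> u \<le> l" if "u \<in> G" for u
    using that \<open>0 \<le> s\<close> \<open>0 < b\<close> by (auto simp: G_def l_def grid_def intro!: mult_right_mono)
  ultimately have G: "finite G" "l \<in> G" "\<forall>u\<in>G. 0 \<le> u \<and> u \<le> l"
    by (auto simp: G_def)
  have Suc_n: "grid s b (Suc n) = insert (l + b) G"
    using Suc.hyps by (simp add: G_def l_def grid_Suc of_nat_diff algebra_simps)
  have "path_prob G g * (\<Prod>u\<in>G. f (g u)) * (\<Sum>y\<in>UNIV. heat L b (g l) y * f y)
      \<le> path_prob G g * (\<Prod>u\<in>G. f (g u)) * \<rho>" for g
  proof (cases "path_prob G g = 0")
    case False
    then have "reachable l (g l)"
      using G by (intro reachable_of_path_prob_pos) (auto simp: path_prob_def less_le)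
    then show ?thesis
      by (intro mult_left_mono step mult_nonneg_nonneg prod_nonneg f) (simp_all add: path_prob_def)
  qed simp
  then have "(\<Sum>z\<in>PiE (grid s b (Suc n)) (\<lambda>_. UNIV).
                path_prob (grid s b (Suc n)) z * (\<Prod>u\<in>grid s b (Suc n). f (z u)))
      \<le> \<rho> * (\<Sum>g\<in>PiE G (\<lambda>_. UNIV). path_prob G g * (\<Prod>u\<in>G. f (g u)))"
    unfolding Suc_n sum_path_prob_insert_eq[OF G \<open>0 < b\<close>] sum_distrib_left
    by (intro sum_mono) (simp add: mult_ac)
  also have "\<dots> \<le> \<rho> * (F * \<rho> ^ (n - 1))"
    using Suc.IH \<open>0 \<le> \<rho>\<close> by (simp add: G_def mult_left_mono)
  also have "\<dots> = F * \<rho> ^ (Suc n - 1)"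
    using Suc.hyps by (cases n) (auto simp: mult_ac)
  finally show ?case .
qed

lemma expectation_grid_prod_le:
  assumes "0 \<le> s" "0 < b" "1 \<le> n" and f: "\<And>y. 0 \<le> f y" "\<And>y. f y \<le> F" and "0 \<le> \<rho>"
    and step: "\<And>s' x. reachable s' x \<Longrightarrow> (\<Sum>y\<in>UNIV. heat L b x y * f y) \<le> \<rho>"
  shows "expectation (\<lambda>\<omega>. \<Prod>j<n. f (X (s + real j * b) \<omega>)) \<le> F * \<rho> ^ (n - 1)"
proof -
  have "inj_on (\<lambda>j. s + real j * b) {..<n}"
    using \<open>0 < b\<close> by (auto simp: inj_on_def)
  then have "(\<Prod>j<n. f (X (s + real j * b) \<omega>)) = (\<Prod>u\<in>grid s b n. f (X u \<omega>))" for \<omega>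
    by (simp add: grid_def prod.reindex)
  then have "expectation (\<lambda>\<omega>. \<Prod>j<n. f (X (s + real j * b) \<omega>))
      = expectation (\<lambda>\<omega>. \<Prod>u\<in>grid s b n. f (X u \<omega>))"
    by (simp only:)
  also have "\<dots> = (\<Sum>z\<in>PiE (grid s b n) (\<lambda>_. UNIV).
      path_prob (grid s b n) z * (\<Prod>u\<in>grid s b n. f (z u)))"
    using grid_nonneg[of s b n] assms(1,2) by (intro expectation_prod_eq_sum_path_prob) auto
  also have "\<dots> \<le> F * \<rho> ^ (n - 1)"
    by (rule sum_path_prob_grid_le[OF assms])
  finally show ?thesis .
qed

end

section \<open>Analytic estimates\<close>

lemma exp_le_quadratic_of_nonpos:
  fixes x :: real
  assumes "x \<le> 0"
  shows "exp x \<le> 1 + x + x^2 / 2"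
proof -
  let ?g = "\<lambda>x::real. 1 + x + x^2 / 2 - exp x"
  have "?g 0 \<le> ?g x"
  proof (rule DERIV_nonpos_imp_nonincreasing[OF assms])
    fix y :: real
    assume "x \<le> y" "y \<le> 0"
    show "\<exists>d. DERIV ?g y :> d \<and> d \<le> 0"
      by (intro exI conjI derivative_eq_intros refl) (use exp_ge_add_one_self[of y] in auto)
  qed
  then show ?thesis by simp
qed

lemma exp_le_quadratic:
  fixes x c :: real
  assumes "x \<le> c" "0 \<le> c"
  shows "exp x \<le> 1 + x + x^2 / 2 * exp c"
proof (cases "x \<le> 0")
  case True
  have "x^2 / 2 \<le> x^2 / 2 * exp c"
    using assms(2) by (simp add: mult_le_cancel_left1)
  then show ?thesis using exp_le_quadratic_of_nonpos[OF True] by linarith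
next
  case False
  obtain \<xi> where \<xi>: "\<bar>\<xi>\<bar> \<le> \<bar>x\<bar>" "exp x = (\<Sum>m<2. x ^ m / fact m) + exp \<xi> / fact 2 * x ^ 2"
    using Maclaurin_exp_le[of x 2] by blast
  have "exp \<xi> \<le> exp c" using \<xi>(1) False assms(1) by simp
  then have "exp \<xi> / 2 * x ^ 2 \<le> x ^ 2 / 2 * exp c"
    by (simp add: mult.commute mult_right_mono)
  moreover have "exp x = 1 + x + exp \<xi> / 2 * x ^ 2"
    using \<xi>(2) by (simp add: numeral_2_eq_2 lessThan_Suc)
  ultimately show ?thesis by linarith
qed

lemma exp_one_fifth_le: "exp (1/5 :: real) \<le> 5/4"
proof -
  have "4/5 \<le> exp (-1/5 :: real)"
    using exp_ge_add_one_self[of "-1/5 :: real"] by simp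
  then have "inverse (exp (-1/5 :: real)) \<le> inverse (4/5)"
    by (intro le_imp_inverse_le) auto
  then show ?thesis by (simp add: exp_minus[symmetric])
qed

lemma abs_le_sup_norm: "\<bar>h x\<bar> \<le> sup_norm h"
  unfolding sup_norm_def by (rule Max_ge) auto

lemma pi_mean_le_sup_norm:
  assumes "is_distribution \<pi>"
  shows "pi_mean \<pi> h \<le> sup_norm h"
proof -
  have "pi_mean \<pi> h \<le> (\<Sum>x\<in>UNIV. \<pi> x * sup_norm h)"
    unfolding pi_mean_def using assms abs_le_sup_norm[of h]
    by (intro sum_mono mult_left_mono) (auto simp: is_distribution_def abs_le_iff)
  then show ?thesis
    using assms by (simp add: is_distribution_def sum_distrib_right[symmetric])
qed

lemma pi_var_nonneg: "is_distribution \<pi> \<Longrightarrow> 0 \<le> pi_var \<pi> h"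
  by (auto simp: pi_var_def pi_mean_def is_distribution_def intro!: sum_nonneg)

lemma pi_exp_centered_le:
  fixes \<pi> h :: "'a::finite \<Rightarrow> real"
  assumes "is_distribution \<pi>" and c: "0 \<le> c" "\<And>x. \<mu> * (h x - pi_mean \<pi> h) \<le> c"
  shows "(\<Sum>x\<in>UNIV. \<pi> x * exp (\<mu> * (h x - pi_mean \<pi> h))) \<le> 1 + \<mu>^2 * pi_var \<pi> h / 2 * exp c"
proof -
  define m where "m = pi_mean \<pi> h"
  have \<pi>: "\<And>x. 0 \<le> \<pi> x" "(\<Sum>x\<in>UNIV. \<pi> x) = 1"
    using assms(1) by (auto simp: is_distribution_def)
  have "(\<Sum>x\<in>UNIV. \<pi> x * exp (\<mu> * (h x - m)))
      \<le> (\<Sum>x\<in>UNIV. \<pi> x * (1 + \<mu> * (h x - m) + (\<mu> * (h x - m))^2 / 2 * exp c))"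
    using c by (intro sum_mono mult_left_mono exp_le_quadratic \<pi>) (auto simp: m_def)
  also have "\<dots> = (\<Sum>x\<in>UNIV. \<pi> x) + \<mu> * ((\<Sum>x\<in>UNIV. \<pi> x * h x) - m * (\<Sum>x\<in>UNIV. \<pi> x))
      + \<mu>^2 / 2 * exp c * (\<Sum>x\<in>UNIV. \<pi> x * (h x - m)^2)"
  proof -
    have "\<pi> x * (1 + \<mu> * (h x - m) + (\<mu> * (h x - m))^2 / 2 * exp c)
        = \<pi> x + \<mu> * (\<pi> x * h x - m * \<pi> x) + \<mu>^2 / 2 * exp c * (\<pi> x * (h x - m)^2)" for x
      by (simp only: power_mult_distrib, simp add: algebra_simps)
    then show ?thesis
      by (simp only: sum.distrib sum_subtractf sum_distrib_left[symmetric])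
  qed
  also have "\<dots> = 1 + \<mu>^2 * pi_var \<pi> h / 2 * exp c"
    using \<pi>(2) by (simp add: m_def pi_var_def pi_mean_def)
  finally show ?thesis by (simp add: m_def)
qed

lemma has_integral_ceiling_step:
  fixes \<phi> :: "real \<Rightarrow> real" and N :: nat
  assumes "0 < t" "0 < N"
  shows "((\<lambda>s. \<phi> (t / N * \<lceil>s * N / t\<rceil>)) has_integral (\<Sum>i<k. t / N * \<phi> (t / N * (real i + 1))))
          {0..real k * t / N}"
proof (induction k)
  case 0
  then show ?case
    using has_integral_refl(2)[of "\<lambda>s. \<phi> (t / N * \<lceil>s * N / t\<rceil>)" 0] by simp
next
  case (Suc k)
  let ?a = "real k * t / N" and ?b = "real (Suc k) * t / N"
  have ab: "0 \<le> ?a" "?a \<le> ?b" "?b - ?a = t / N"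
    using assms by (simp_all add: divide_right_mono algebra_simps add_divide_distrib)
  have "\<lceil>s * N / t\<rceil> = int k + 1" if "s \<in> {?a..?b} - {?a}" for s
  proof -
    have "real k < s * N / t" "s * N / t \<le> real k + 1"
      using that assms by (auto simp: field_simps)
    then show ?thesis by (simp add: ceiling_eq_iff)
  qed
  note cell = this
  have "((\<lambda>s. \<phi> (t / N * (real k + 1))) has_integral (t / N * \<phi> (t / N * (real k + 1)))) {?a..?b}"
    using has_integral_const_real[of "\<phi> (t / N * (real k + 1))" ?a ?b] ab by simp
  then have "((\<lambda>s. \<phi> (t / N * \<lceil>s * N / t\<rceil>)) has_integral (t / N * \<phi> (t / N * (real k + 1)))) {?a..?b}"
  proof (rule has_integral_spike_finite[of "{?a}", rotated 2])
    fix s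
    assume "s \<in> {?a..?b} - {?a}"
    then show "\<phi> (t / N * \<lceil>s * N / t\<rceil>) = \<phi> (t / N * (real k + 1))"
      using cell by simp
  qed simp
  from has_integral_combine[OF ab(1,2) Suc.IH this]
  show ?case by (simp add: add.commute)
qed

text \<open>At every point, the argument rounded up to the mesh eventually lies in the interval of
  constancy to the right of that point.\<close>

lemma right_riemann_sum_tendsto:
  fixes \<phi> :: "real \<Rightarrow> real" and t :: real and N :: "nat \<Rightarrow> nat"
  assumes "0 < t"
    and rc: "\<And>s. 0 \<le> s \<Longrightarrow> \<exists>\<epsilon>>0. \<forall>u. s \<le> u \<and> u < s + \<epsilon> \<longrightarrow> \<phi> u = \<phi> s"
    and bdd: "\<And>s. \<bar>\<phi> s\<bar> \<le> B"
    and N: "filterlim N at_top sequentially" "\<And>K. 0 < N K"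
  shows "(\<lambda>K. \<Sum>i<N K. t / N K * \<phi> (t / N K * (real i + 1))) \<longlonglongrightarrow> integral {0..t} \<phi>"
proof -
  define g :: "nat \<Rightarrow> real \<Rightarrow> real" where "g K s = \<phi> (t / N K * \<lceil>s * N K / t\<rceil>)" for K s
  have g: "(g K has_integral (\<Sum>i<N K. t / N K * \<phi> (t / N K * (real i + 1)))) {0..t}" for K
    using has_integral_ceiling_step[OF \<open>0 < t\<close>, of "N K" \<phi> "N K"] N(2)[of K]
    unfolding g_def by simp
  have "(\<lambda>K. g K s) \<longlonglongrightarrow> \<phi> s" if s: "s \<in> {0..t}" for s
  proof -
    obtain \<epsilon> where "\<epsilon> > 0" and \<epsilon>: "\<forall>u. s \<le> u \<and> u < s + \<epsilon> \<longrightarrow> \<phi> u = \<phi> s"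
      using rc[of s] s by auto
    have "\<forall>\<^sub>F K in sequentially. nat \<lceil>t / \<epsilon>\<rceil> + 1 \<le> N K"
      using N(1) by (simp add: filterlim_at_top)
    then show ?thesis
    proof (rule tendsto_eventually[OF eventually_mono])
      fix K
      assume "nat \<lceil>t / \<epsilon>\<rceil> + 1 \<le> N K"
      then have K: "t / \<epsilon> < real (N K)"
        by linarith
      have NK: "0 < real (N K)" using N(2)[of K] by simp
      define x where "x = s * N K / t"
      have sx: "s = t / N K * x" and step: "0 < t / N K" "t / N K < \<epsilon>"
        using NK K \<open>0 < t\<close> \<open>\<epsilon> > 0\<close> by (simp_all add: x_def field_simps)
      have "s \<le> t / N K * \<lceil>x\<rceil>"
        unfolding sx using step by (intro mult_left_mono) auto
      moreover have "t / N K * \<lceil>x\<rceil> < t / N K * (x + 1)"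
        using step by (intro mult_strict_left_mono) linarith+
      then have "t / N K * \<lceil>x\<rceil> < s + \<epsilon>"
        using sx step by (simp add: distrib_left)
      ultimately have "\<phi> (t / N K * \<lceil>x\<rceil>) = \<phi> s"
        using \<epsilon> by blast
      then show "g K s = \<phi> s"
        by (simp add: g_def x_def)
    qed
  qed
  then have "(\<lambda>K. integral {0..t} (g K)) \<longlonglongrightarrow> integral {0..t} \<phi>"
    using g bdd by (intro dominated_convergence(2)[where h = "\<lambda>_. B"]) (auto simp: g_def)
  moreover have "integral {0..t} (g K) = (\<Sum>i<N K. t / N K * \<phi> (t / N K * (real i + 1)))" for K
    using g by (rule integral_unique)
  ultimately show ?thesis
    by simp
qed

lemma sum_lessThan_mult_eq:
  fixes g :: "nat \<Rightarrow> 'b::comm_monoid_add"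
  shows "(\<Sum>i<n * k. g i) = (\<Sum>j<n. \<Sum>i<k. g (j * k + i))"
proof -
  have "(\<Sum>i<n * k. g i) = (\<Sum>j<n. sum g {j * k..<j * k + k})"
    by (rule sum.nat_group[symmetric])
  also have "\<dots> = (\<Sum>j<n. \<Sum>i<k. g (j * k + i))"
    by (simp add: sum.shift_bounds_nat_ivl[of g 0 "j * k" k for j, simplified] lessThan_atLeast0
        add.commute)
  finally show ?thesis .
qed

lemma exp_mean_le_mean_exp:
  fixes x :: "nat \<Rightarrow> real"
  assumes "0 < k"
  shows "exp ((\<Sum>i<k. x i) / k) \<le> (\<Sum>i<k. exp (x i)) / k"
proof -
  have "exp (\<Sum>i<k. (1 / k) *\<^sub>R x i) \<le> (\<Sum>i<k. 1 / k * exp (x i))"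
    using assms by (intro convex_on_sum[OF _ _ exp_convex]) auto
  then show ?thesis
    by (simp add: sum_divide_distrib)
qed

lemma right_riemann_sum_le:
  fixes \<phi> :: "real \<Rightarrow> real" and N :: nat
  assumes "0 < t" "0 < N" "\<And>s. \<phi> s \<le> B"
  shows "(\<Sum>i<N. t / N * \<phi> (t / N * (real i + 1))) \<le> t * B"
proof -
  have "(\<Sum>i<N. t / N * \<phi> (t / N * (real i + 1))) \<le> (\<Sum>i<N. t / N * B)"
    using assms by (intro sum_mono mult_left_mono) auto
  then show ?thesis
    using assms(2) by simp
qed

lemma right_riemann_sum_eq_mean_grid_sums:
  fixes \<phi> :: "real \<Rightarrow> real" and t :: real and n K :: nat
  assumes "1 \<le> n"
  shows "(\<Sum>i<n * (K + 1). t / real (n * (K + 1)) * \<phi> (t / real (n * (K + 1)) * (real i + 1)))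
       = t / real (n * (K + 1))
           * (\<Sum>i<K + 1. \<Sum>j<n. \<phi> (t / n / (K + 1) * (real i + 1) + real j * (t / n)))"
proof -
  have field: "t / (x * y) * (real j * y + real i + 1) = t / x / y * (real i + 1) + real j * (t / x)"
    if "x \<noteq> 0" "y \<noteq> 0" for x y :: real and i j :: nat
    using that by (simp add: field_simps)
  have point: "t / real (n * (K + 1)) * (real (j * (K + 1) + i) + 1)
      = t / n / (K + 1) * (real i + 1) + real j * (t / n)" for i j
    using field[of "real n" "real K + 1" j i] assms by (simp add: algebra_simps)
  have "(\<Sum>i<n * (K + 1). t / real (n * (K + 1)) * \<phi> (t / real (n * (K + 1)) * (real i + 1)))
      = (\<Sum>j<n. \<Sum>i<K + 1. t / real (n * (K + 1)) * \<phi> (t / n / (K + 1) * (real i + 1) + real j * (t / n)))"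
    by (simp only: sum_lessThan_mult_eq point)
  also have "\<dots> = (\<Sum>i<K + 1. \<Sum>j<n. t / real (n * (K + 1)) * \<phi> (t / n / (K + 1) * (real i + 1) + real j * (t / n)))"
    by (rule sum.swap)
  finally show ?thesis
    by (simp only: sum_distrib_left)
qed

lemma exp_right_riemann_sum_le_mean_exp:
  fixes \<phi> :: "real \<Rightarrow> real" and t \<mu> :: real and n K :: nat
  assumes "0 < t" "1 \<le> n"
  defines "b \<equiv> t / n"
  shows "exp (\<mu> / b * (\<Sum>i<n * (K + 1). t / real (n * (K + 1)) * \<phi> (t / real (n * (K + 1)) * (real i + 1))))
       \<le> (\<Sum>i<K + 1. exp (\<mu> * (\<Sum>j<n. \<phi> (b / (K + 1) * (real i + 1) + real j * b)))) / (K + 1)"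
proof -
  define S where "S i = (\<Sum>j<n. \<phi> (b / (K + 1) * (real i + 1) + real j * b))" for i
  have "0 < b" using assms by (simp add: b_def)
  have "(\<Sum>i<n * (K + 1). t / real (n * (K + 1)) * \<phi> (t / real (n * (K + 1)) * (real i + 1)))
      = b / (K + 1) * (\<Sum>i<K + 1. S i)"
    using right_riemann_sum_eq_mean_grid_sums[OF \<open>1 \<le> n\<close>, where \<phi> = \<phi>]
    unfolding S_def b_def by (simp only: divide_divide_eq_left of_nat_mult)
  then have "\<mu> / b * (\<Sum>i<n * (K + 1). t / real (n * (K + 1)) * \<phi> (t / real (n * (K + 1)) * (real i + 1)))
      = (\<Sum>i<K + 1. \<mu> * S i) / (K + 1)"
    using \<open>0 < b\<close> by (simp add: sum_distrib_left[symmetric])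
  with exp_mean_le_mean_exp[of "K + 1" "\<lambda>i. \<mu> * S i"] show ?thesis
    unfolding S_def by simp
qed

lemma (in prob_space) prob_ge_le_of_exp_moment_tendsto:
  fixes Z :: "nat \<Rightarrow> 'a \<Rightarrow> real"
  assumes Z: "\<And>K. Z K \<in> borel_measurable M" and lim: "\<And>\<omega>. \<omega> \<in> space M \<Longrightarrow> (\<lambda>K. Z K \<omega>) \<longlonglongrightarrow> Y \<omega>"
    and bdd: "\<And>K \<omega>. Z K \<omega> \<le> C" and "0 < \<theta>"
    and B: "\<And>K. expectation (\<lambda>\<omega>. exp (\<theta> * Z K \<omega>)) \<le> B"
  shows "prob {\<omega>\<in>space M. c \<le> Y \<omega>} \<le> exp (- \<theta> * c) * B"
proof -
  have [measurable]: "Y \<in> borel_measurable M"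
    using lim Z by (rule borel_measurable_LIMSEQ_real)
  note Z[measurable]
  have dom: "AE \<omega> in M. norm (exp (\<theta> * Z K \<omega>)) \<le> exp (\<theta> * C)" for K
    using bdd \<open>0 < \<theta>\<close> by (intro AE_I2) (simp add: mult_left_mono)
  have tendsto: "AE \<omega> in M. (\<lambda>K. exp (\<theta> * Z K \<omega>)) \<longlonglongrightarrow> exp (\<theta> * Y \<omega>)"
    using lim by (intro AE_I2 tendsto_intros) auto
  have int: "integrable M (\<lambda>\<omega>. exp (\<theta> * Y \<omega>))"
    by (rule integrable_dominated_convergence[OF _ _ _ tendsto dom]) auto
  have "(\<lambda>K. expectation (\<lambda>\<omega>. exp (\<theta> * Z K \<omega>))) \<longlonglongrightarrow> expectation (\<lambda>\<omega>. exp (\<theta> * Y \<omega>))"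
    by (rule integral_dominated_convergence[OF _ _ _ tendsto dom]) auto
  then have "expectation (\<lambda>\<omega>. exp (\<theta> * Y \<omega>)) \<le> B"
    using B by (intro LIMSEQ_le_const2) auto
  moreover have "prob {\<omega>\<in>space M. c \<le> Y \<omega>} \<le> exp (- \<theta> * c) * expectation (\<lambda>\<omega>. exp (\<theta> * Y \<omega>))"
    using Chernoff_ineq_ge[OF \<open>0 < \<theta>\<close>, of "space M" Y c] integrable_mult_indicator[OF sets.top int] int
    by (simp add: set_integrable_def set_integral_space)
  ultimately show ?thesis
    by (meson exp_ge_zero mult_left_mono order_trans)
qed

section \<open>From skeletons to the occupation integral\<close>

context ctmc
begin

text \<open>The occupation integral is the limit of right Riemann sums along the meshes
  \<open>t / (n (K + 1))\<close>, each of which is the mean of \<open>K + 1\<close> shifted sums over grids of step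
  \<open>t / n\<close>; convexity of \<^const>\<open>exp\<close> and dominated convergence carry the exponential moment
  bound from the grid sums to the integral.\<close>

lemma expectation_exp_right_riemann_sum_le:
  fixes h :: "'a \<Rightarrow> real" and t \<mu> :: real and n K :: nat
  assumes "0 < t" "1 \<le> n" "0 < \<mu>"
    and grid: "\<And>s. 0 \<le> s \<Longrightarrow> expectation (\<lambda>\<omega>. exp (\<mu> * (\<Sum>j<n. h (X (s + real j * (t / n)) \<omega>)))) \<le> B"
  defines "R \<equiv> \<lambda>\<omega>. \<Sum>i<n * (K + 1). t / real (n * (K + 1)) * h (X (t / real (n * (K + 1)) * (real i + 1)) \<omega>)"
  shows "expectation (\<lambda>\<omega>. exp (\<mu> * n / t * R \<omega>)) \<le> B"
proof -
  define b where "b = t / n"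
  define S :: "nat \<Rightarrow> 'w \<Rightarrow> real"
    where "S i \<omega> = (\<Sum>j<n. h (X (b / (K + 1) * (real i + 1) + real j * b) \<omega>))" for i \<omega>
  have b: "0 < b" "\<mu> * n / t = \<mu> / b" using assms by (simp_all add: b_def)
  have [measurable]: "R \<in> borel_measurable M" "S i \<in> borel_measurable M" for i
    unfolding R_def S_def using assms b
    by (auto intro!: borel_measurable_sum borel_measurable_times borel_measurable_comp_X)
  have "\<mu> * S i \<omega> \<le> \<mu> * (n * sup_norm h)" for i \<omega>
    using abs_le_sup_norm[of h] \<open>0 < \<mu>\<close> unfolding S_def
    by (intro mult_left_mono) (auto intro: order_trans[OF sum_mono, of _ _ "\<lambda>_. sup_norm h"] simp: abs_le_iff)
  then have int_S: "integrable M (\<lambda>\<omega>. exp (\<mu> * S i \<omega>))" for i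
    by (intro integrable_const_bound[where B = "exp (\<mu> * (n * sup_norm h))"]) auto
  have "R \<omega> \<le> t * sup_norm h" for \<omega>
    unfolding R_def using \<open>0 < t\<close> \<open>1 \<le> n\<close> abs_le_sup_norm[of h]
    by (intro right_riemann_sum_le) (auto simp: abs_le_iff)
  then have int_R: "integrable M (\<lambda>\<omega>. exp (\<mu> / b * R \<omega>))"
    using b \<open>0 < \<mu>\<close>
    by (intro integrable_const_bound[where B = "exp (\<mu> / b * (t * sup_norm h))"])
       (auto intro!: divide_right_mono mult_left_mono)
  have "exp (\<mu> / b * R \<omega>) \<le> (\<Sum>i<K + 1. exp (\<mu> * S i \<omega>)) / (K + 1)" for \<omega>
    using exp_right_riemann_sum_le_mean_exp[OF \<open>0 < t\<close> \<open>1 \<le> n\<close>, where \<phi> = "\<lambda>s. h (X s \<omega>)"]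
    unfolding R_def S_def b_def .
  then have "expectation (\<lambda>\<omega>. exp (\<mu> / b * R \<omega>))
      \<le> expectation (\<lambda>\<omega>. (\<Sum>i<K + 1. exp (\<mu> * S i \<omega>)) / (K + 1))"
    using int_S int_R by (intro integral_mono) auto
  also have "\<dots> = (\<Sum>i<K + 1. expectation (\<lambda>\<omega>. exp (\<mu> * S i \<omega>))) / (K + 1)"
    using int_S by simp
  also have "\<dots> \<le> (\<Sum>i<K + 1. B) / (K + 1)"
  proof (intro divide_right_mono sum_mono)
    fix i
    have "0 \<le> b / (K + 1) * (real i + 1)"
      using b by simp
    from grid[OF this] show "expectation (\<lambda>\<omega>. exp (\<mu> * S i \<omega>)) \<le> B"
      unfolding S_def b_def .
  qed simp
  finally show ?thesis
    by (simp add: b)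
qed

lemma prob_integral_ge_le_of_grid_exp_moment:
  fixes h :: "'a \<Rightarrow> real"
  assumes "0 < t" "1 \<le> n" "0 < \<mu>"
    and grid: "\<And>s. 0 \<le> s \<Longrightarrow> expectation (\<lambda>\<omega>. exp (\<mu> * (\<Sum>j<n. h (X (s + real j * (t / n)) \<omega>)))) \<le> B"
  shows "prob {\<omega>\<in>space M. c \<le> integral {0..t} (\<lambda>s. h (X s \<omega>))} \<le> exp (- (\<mu> * n / t) * c) * B"
proof -
  define N :: "nat \<Rightarrow> nat" where "N K = n * (K + 1)" for K
  define R :: "nat \<Rightarrow> 'w \<Rightarrow> real"
    where "R K \<omega> = (\<Sum>i<N K. t / N K * h (X (t / N K * (real i + 1)) \<omega>))" for K \<omega>
  have N_pos: "0 < N K" for K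
    using \<open>1 \<le> n\<close> by (simp add: N_def)
  have "R K \<in> borel_measurable M" for K
    unfolding R_def using \<open>0 < t\<close>
    by (auto intro!: borel_measurable_sum borel_measurable_times borel_measurable_comp_X)
  moreover have "R K \<omega> \<le> t * sup_norm h" for K \<omega>
    unfolding R_def using \<open>0 < t\<close> N_pos abs_le_sup_norm[of h]
    by (intro right_riemann_sum_le) (auto simp: abs_le_iff)
  moreover have "expectation (\<lambda>\<omega>. exp (\<mu> * n / t * R K \<omega>)) \<le> B" for K
    unfolding R_def N_def using expectation_exp_right_riemann_sum_le[OF assms] .
  moreover have "(\<lambda>K. R K \<omega>) \<longlonglongrightarrow> integral {0..t} (\<lambda>s. h (X s \<omega>))" if "\<omega> \<in> space M" for \<omega>
    unfolding R_def
  proof (rule right_riemann_sum_tendsto[OF \<open>0 < t\<close> _ abs_le_sup_norm])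
    show "\<exists>\<epsilon>>0. \<forall>u. s \<le> u \<and> u < s + \<epsilon> \<longrightarrow> h (X u \<omega>) = h (X s \<omega>)" if "0 \<le> s" for s
      using right_continuous_path[OF \<open>\<omega> \<in> space M\<close> that] by metis
    have "K \<le> N K" for K
      using mult_le_mono1[of 1 n "K + 1"] \<open>1 \<le> n\<close> by (simp add: N_def)
    then show "filterlim N at_top sequentially"
      unfolding filterlim_at_top by (metis eventually_ge_at_top eventually_mono order_trans)
  qed (rule N_pos)
  ultimately show ?thesis
    using assms by (intro prob_ge_le_of_exp_moment_tendsto[where Z = R]) auto
qed

end

section \<open>The deviation bound\<close>

text \<open>The factor \<open>2/5\<close> in \<open>\<mu>\<close> keeps the tilt \<open>\<mu> (h - \<pi>(h))\<close> below \<open>1/5\<close>, where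
  \<open>exp (1/5) \<le> 5/4\<close>.\<close>

lemma tilted_exp_bounds:
  fixes \<pi> h :: "'a::finite \<Rightarrow> real" and \<delta> \<sigma> :: real
  defines "m \<equiv> pi_mean \<pi> h"
  defines "\<mu> \<equiv> 2 * \<delta> * m / (5 * \<sigma>^2)" and "a \<equiv> \<delta>^2 * m^2 / (6 * \<sigma>^2)"
  assumes \<pi>: "is_distribution \<pi>" and var: "pi_var \<pi> h \<le> \<sigma>^2"
    and "0 < \<delta>" "0 < m" and small: "\<delta> * m * sup_norm h \<le> \<sigma>^2 / 2"
  shows "0 < \<mu>" and "\<mu> * \<delta> * m = 12/5 * a" and "\<And>x. exp (\<mu> * (h x - m)) \<le> 5/4"
    and "(\<Sum>x\<in>UNIV. \<pi> x * exp (\<mu> * (h x - m))) \<le> 1 + 3/5 * a"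
proof -
  have "m \<le> sup_norm h"
    unfolding m_def using \<pi> by (rule pi_mean_le_sup_norm)
  then have "0 < \<delta> * m * sup_norm h"
    using \<open>0 < \<delta>\<close> \<open>0 < m\<close> by simp
  then have \<sigma>: "0 < \<sigma>^2" using small by linarith
  show "0 < \<mu>" "\<mu> * \<delta> * m = 12/5 * a"
    using \<sigma> \<open>0 < \<delta>\<close> \<open>0 < m\<close> by (simp_all add: \<mu>_def a_def field_simps power2_eq_square)
  have "\<mu> * sup_norm h \<le> 1/5"
    using small \<sigma> by (simp add: \<mu>_def field_simps)
  moreover have "\<mu> * (h x - m) \<le> \<mu> * sup_norm h" for x
    using abs_le_sup_norm[of h x] abs_ge_self[of "h x"] \<open>0 < m\<close> \<open>0 < \<mu>\<close>
    by (intro mult_left_mono) auto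
  ultimately have tilt: "\<mu> * (h x - m) \<le> 1/5" for x
    by (meson order_trans)
  then show "exp (\<mu> * (h x - m)) \<le> 5/4" for x
    using exp_one_fifth_le by (meson exp_le_cancel_iff order_trans)
  have "(\<Sum>x\<in>UNIV. \<pi> x * exp (\<mu> * (h x - m))) \<le> 1 + \<mu>^2 * pi_var \<pi> h / 2 * exp (1/5)"
    using pi_exp_centered_le[OF \<pi>, of "1/5" \<mu> h] tilt by (simp add: m_def)
  also have "\<dots> \<le> 1 + \<mu>^2 * \<sigma>^2 / 2 * (5/4)"
    using var exp_one_fifth_le pi_var_nonneg[OF \<pi>, of h]
    by (intro add_left_mono mult_mono divide_right_mono) auto
  also have "\<mu>^2 * \<sigma>^2 / 2 * (5/4) = 3/5 * a"
    using \<sigma> by (simp add: \<mu>_def a_def field_simps power2_eq_square)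
  finally show "(\<Sum>x\<in>UNIV. \<pi> x * exp (\<mu> * (h x - m))) \<le> 1 + 3/5 * a" .
qed

lemma tail_bound_arith:
  fixes a :: real
  assumes "0 \<le> a" "1 \<le> n"
  shows "exp (- (12/5) * a * n) * (5/4 * (1 + 49/40 * a) ^ (n - 1)) \<le> 4 * exp (- (real n - 1) * a)"
proof -
  have "(1 + 49/40 * a) ^ (n - 1) \<le> exp (49/40 * a) ^ (n - 1)"
    using assms(1) by (intro power_mono) auto
  also have "\<dots> = exp (real (n - 1) * (49/40 * a))"
    by (rule exp_of_nat_mult[symmetric])
  finally have "exp (- (12/5) * a * n) * (5/4 * (1 + 49/40 * a) ^ (n - 1))
      \<le> exp (- (12/5) * a * n) * (5/4 * exp (real (n - 1) * (49/40 * a)))"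
    by (intro mult_left_mono) auto
  also have "\<dots> = 5/4 * exp (- (12/5) * a * n + real (n - 1) * (49/40 * a))"
    by (simp only: exp_add mult_ac)
  also have "\<dots> \<le> 4 * exp (- (real n - 1) * a)"
    using assms by (intro mult_mono) (auto simp: of_nat_diff algebra_simps)
  finally show ?thesis .
qed

context ctmc_invariant
begin

lemma prob_occupation_deviation_le:
  fixes h :: "'a \<Rightarrow> real" and \<delta> \<sigma> t T :: real
  defines "m \<equiv> pi_mean \<pi> h"
  defines "a \<equiv> \<delta>^2 * m^2 / (6 * \<sigma>^2)"
  assumes T: "T \<in> mixing_set L \<pi>" and l: "1 \<le> l" "(1/2) ^ (l + 1) \<le> a / 2"
    and n: "1 \<le> n" "real l * T \<le> t / n" and "0 < t"
    and var: "pi_var \<pi> h \<le> \<sigma>^2" and "0 < \<delta>" "0 < m" and small: "\<delta> * m * sup_norm h \<le> \<sigma>^2 / 2"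
  shows "prob {\<omega>\<in>space M. integral {0..t} (\<lambda>s. h (X s \<omega>)) - t * m \<ge> \<delta> * t * m}
         \<le> 4 * exp (- (real n - 1) * a)"
proof -
  define \<mu> where "\<mu> = 2 * \<delta> * m / (5 * \<sigma>^2)"
  define f where "f y = exp (\<mu> * (h y - m))" for y
  \<comment> \<open>\<open>49/40 = 3/5 + 5/8\<close>: the variance term of \<open>\<pi>(f)\<close> plus the mixing error
    \<open>2^-(l+1) \<cdot> 5/4 \<le> 5/8 a\<close>\<close>
  define \<rho> where "\<rho> = 1 + 49/40 * a"
  have \<pi>: "is_distribution \<pi>" using invariant by (simp add: is_invariant_def)
  note tilt = tilted_exp_bounds[OF \<pi> var \<open>0 < \<delta>\<close> \<open>0 < m\<close>[unfolded m_def] small[unfolded m_def],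
      folded m_def, folded \<mu>_def a_def]
  have "0 \<le> a" unfolding a_def by simp
  have step: "(\<Sum>y\<in>UNIV. heat L (t / n) x y * f y) \<le> \<rho>" if "reachable s x" for s x
    using sum_heat_mult_le[OF T l(1) n(2) that, of f "5/4"] tilt(3,4) l(2)
    by (simp add: f_def \<rho>_def)
  have "expectation (\<lambda>\<omega>. exp (\<mu> * (\<Sum>j<n. h (X (s + real j * (t / n)) \<omega>))))
      \<le> exp (\<mu> * n * m) * (5/4 * \<rho> ^ (n - 1))" if "0 \<le> s" for s
  proof -
    have "exp (\<mu> * (\<Sum>j<n. h (X (s + real j * (t / n)) \<omega>)))
        = exp (\<mu> * n * m) * (\<Prod>j<n. f (X (s + real j * (t / n)) \<omega>))" for \<omega>
      by (simp add: f_def exp_sum[symmetric] exp_add[symmetric] sum_distrib_left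
          right_diff_distrib sum_subtractf)
    moreover have "expectation (\<lambda>\<omega>. \<Prod>j<n. f (X (s + real j * (t / n)) \<omega>)) \<le> 5/4 * \<rho> ^ (n - 1)"
      using \<open>0 \<le> s\<close> \<open>0 < t\<close> n(1) tilt(3) \<open>0 \<le> a\<close> step
      by (intro expectation_grid_prod_le) (auto simp: f_def \<rho>_def)
    ultimately show ?thesis
      by (simp add: mult_left_mono)
  qed
  then have "prob {\<omega>\<in>space M. (1 + \<delta>) * t * m \<le> integral {0..t} (\<lambda>s. h (X s \<omega>))}
      \<le> exp (- (\<mu> * n / t) * ((1 + \<delta>) * t * m)) * (exp (\<mu> * n * m) * (5/4 * \<rho> ^ (n - 1)))"
    using \<open>0 < t\<close> n(1) tilt(1) by (intro prob_integral_ge_le_of_grid_exp_moment) auto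
  also have "\<dots> = exp (- (12/5) * a * n) * (5/4 * \<rho> ^ (n - 1))"
  proof -
    have "\<mu> * n / t * ((1 + \<delta>) * t * m) = \<mu> * n * m + n * (\<mu> * \<delta> * m)"
      using \<open>0 < t\<close> by (simp add: field_simps)
    then have "- (\<mu> * n / t) * ((1 + \<delta>) * t * m) + \<mu> * n * m = - (12/5) * a * n"
      using tilt(2) by simp
    moreover have "exp A * (exp B * Z) = exp (A + B) * Z" for A B Z :: real
      by (simp add: exp_add mult.assoc)
    ultimately show ?thesis by metis
  qed
  also have "\<dots> \<le> 4 * exp (- (real n - 1) * a)"
    unfolding \<rho>_def using \<open>0 \<le> a\<close> n(1) by (rule tail_bound_arith)
  finally show ?thesis
    by (simp add: algebra_simps)
qed

end

lemma deviation_parameters: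
  fixes \<pi> h :: "'a::finite \<Rightarrow> real" and \<delta> \<sigma> :: real
  defines "m \<equiv> pi_mean \<pi> h"
  assumes \<pi>: "is_distribution \<pi>" and "0 < m" "0 < \<delta>"
    and \<delta>: "\<delta> \<le> min (\<sigma>^2 / (2 * m * sup_norm h)) 1"
  shows "\<delta> * m * sup_norm h \<le> \<sigma>^2 / 2" and "0 < \<delta>^2 * m^2 / (6 * \<sigma>^2)"
    and "\<delta>^2 * m^2 / (6 * \<sigma>^2) \<le> 1/12"
proof -
  have "m \<le> sup_norm h"
    unfolding m_def using \<pi> by (rule pi_mean_le_sup_norm)
  then have H: "0 < sup_norm h" using \<open>0 < m\<close> by linarith
  have "\<delta> * (2 * m * sup_norm h) \<le> \<sigma>^2 / (2 * m * sup_norm h) * (2 * m * sup_norm h)"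
    using \<delta> \<open>0 < m\<close> H by (intro mult_right_mono) auto
  then show small: "\<delta> * m * sup_norm h \<le> \<sigma>^2 / 2"
    using \<open>0 < m\<close> H by (simp add: field_simps)
  moreover have "0 < \<delta> * m * sup_norm h"
    using \<open>0 < \<delta>\<close> \<open>0 < m\<close> H by simp
  ultimately have \<sigma>: "0 < \<sigma>^2"
    by linarith
  then show "0 < \<delta>^2 * m^2 / (6 * \<sigma>^2)"
    using \<open>0 < \<delta>\<close> \<open>0 < m\<close> by simp
  have "\<delta> * m \<le> 1 * m"
    using \<delta> \<open>0 < m\<close> by (intro mult_right_mono) auto
  then have "\<delta> * m \<le> sup_norm h"
    using \<open>m \<le> sup_norm h\<close> by simp
  moreover have "\<delta> * m \<le> \<sigma>^2 / (2 * sup_norm h)"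
    using small H by (simp add: field_simps)
  ultimately have "(\<delta> * m) * (\<delta> * m) \<le> \<sigma>^2 / (2 * sup_norm h) * sup_norm h"
    using \<open>0 < \<delta>\<close> \<open>0 < m\<close> \<sigma> H by (intro mult_mono) auto
  then show "\<delta>^2 * m^2 / (6 * \<sigma>^2) \<le> 1/12"
    using \<sigma> H by (simp add: field_simps power2_eq_square)
qed

lemma pi_min_pos: "(\<And>x. 0 < \<pi> x) \<Longrightarrow> 0 < pi_min \<pi>"
  unfolding pi_min_def by (metis (mono_tags) Min_in UNIV_not_empty finite finite_imageI image_is_empty imageE)

lemma pi_min_le_half:
  fixes \<pi> :: "'a::finite \<Rightarrow> real" and x y :: 'a
  assumes "is_distribution \<pi>" "x \<noteq> y"
  shows "pi_min \<pi> \<le> 1/2"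
proof -
  have "pi_min \<pi> \<le> \<pi> x" "pi_min \<pi> \<le> \<pi> y"
    unfolding pi_min_def by (auto intro: Min_le)
  moreover have "(\<Sum>z\<in>{x, y}. \<pi> z) \<le> (\<Sum>z\<in>UNIV. \<pi> z)"
    using assms(1) by (intro sum_mono2) (auto simp: is_distribution_def)
  ultimately show ?thesis
    using assms by (simp add: is_distribution_def)
qed

lemma pi_mean_eq_of_subsingleton:
  fixes \<pi> h :: "'a::finite \<Rightarrow> real"
  assumes "is_distribution \<pi>" "\<And>x y :: 'a. x = y"
  shows "pi_mean \<pi> h = h z"
proof -
  have "\<pi> x * h x = \<pi> x * h z" for x
    using assms(2)[of x z] by simp
  then have "pi_mean \<pi> h = (\<Sum>x\<in>UNIV. \<pi> x * h z)"
    unfolding pi_mean_def by (rule sum.cong[OF refl])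
  then show ?thesis
    using assms(1) by (simp add: is_distribution_def sum_distrib_right[symmetric])
qed

lemma ceiling_minus_log_bounds:
  fixes q :: real
  assumes "0 < q" "q < 1/2"
  defines "l \<equiv> nat \<lceil>- log 2 q\<rceil> - 1"
  shows "1 \<le> l" and "real l < - log 2 q" and "(1/2) ^ (l + 1) \<le> q"
proof -
  define k where "k = - log 2 q"
  have "log 2 q < log 2 (1/2)"
    using assms by simp
  then have "1 < k" by (simp add: k_def log_divide)
  then have ceil: "1 < \<lceil>k\<rceil>"
    using le_of_int_ceiling[of k] by linarith
  then have "nat 2 \<le> nat \<lceil>k\<rceil>"
    by (intro nat_mono) linarith
  with ceil have l: "real l = real_of_int \<lceil>k\<rceil> - 1"
    by (simp add: l_def k_def[symmetric] of_nat_diff)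
  then show "1 \<le> l" "real l < - log 2 q"
    using \<open>1 < k\<close> by (simp_all add: k_def, linarith+)
  have "(1/2) ^ (l + 1) = inverse ((2::real) ^ (l + 1))"
    by (simp add: power_one_over inverse_eq_divide)
  also have "\<dots> = inverse (2 powr real (l + 1))"
    by (subst powr_realpow) auto
  also have "\<dots> = 2 powr (- real (l + 1))"
    by (rule powr_minus[symmetric])
  also have "\<dots> \<le> 2 powr (- k)"
    using l by (intro powr_mono) linarith+
  also have "\<dots> = q"
    using assms(1) by (simp add: k_def)
  finally show "(1/2) ^ (l + 1) \<le> q" .
qed

lemma block_parameters:
  assumes mix: "mixing_set L \<pi> \<noteq> {}" and q: "0 < q" "q < 1/2" and "0 < t"
    and F: "1 \<le> \<lfloor>t / (- log 2 q * mixing_time L \<pi>) - 1\<rfloor>"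
  obtains l n T where "T \<in> mixing_set L \<pi>" "1 \<le> l" "(1/2) ^ (l + 1) \<le> q"
    and "1 \<le> n" "real l * T \<le> t / n"
    and "real_of_int \<lfloor>t / (- log 2 q * mixing_time L \<pi>) - 1\<rfloor> = real n - 1"
proof -
  define k where "k = - log 2 q"
  define l where "l = nat \<lceil>k\<rceil> - 1"
  define n where "n = nat \<lfloor>t / (k * mixing_time L \<pi>)\<rfloor>"
  note l = ceiling_minus_log_bounds[OF q, folded k_def l_def]
  have fl: "2 \<le> \<lfloor>t / (k * mixing_time L \<pi>)\<rfloor>"
    using F by (simp add: k_def)
  then have n: "real n = real_of_int \<lfloor>t / (k * mixing_time L \<pi>)\<rfloor>" "1 \<le> n"
    unfolding n_def by (simp, linarith)
  have "2 \<le> t / (k * mixing_time L \<pi>)"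
    using fl of_int_floor_le[of "t / (k * mixing_time L \<pi>)"] by linarith
  have kT: "0 < k * mixing_time L \<pi>"
  proof (rule ccontr)
    assume "\<not> 0 < k * mixing_time L \<pi>"
    then have "t / (k * mixing_time L \<pi>) \<le> 0"
      using \<open>0 < t\<close> by (simp add: divide_nonneg_nonpos)
    then show False
      using \<open>2 \<le> t / (k * mixing_time L \<pi>)\<close> by linarith
  qed
  have "1 \<le> real l"
    using l(1) by simp
  then have "0 < k"
    using l(2) unfolding k_def by linarith
  with kT have T0: "0 < mixing_time L \<pi>"
    by (simp add: zero_less_mult_iff)
  have "real n \<le> t / (k * mixing_time L \<pi>)"
    using n(1) by (simp add: of_int_floor_le)
  then have "k * mixing_time L \<pi> \<le> t / n"
    using kT n(2) by (simp add: field_simps)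
  have "real l * mixing_time L \<pi> < k * mixing_time L \<pi>"
    using l(2) T0 unfolding k_def by (rule mult_strict_right_mono)
  then have "Inf (mixing_set L \<pi>) < k * mixing_time L \<pi> / real l"
    using l(1) by (simp add: mixing_time_def field_simps)
  then obtain T where T: "T \<in> mixing_set L \<pi>" "T < k * mixing_time L \<pi> / real l"
    using cInf_lessD[OF mix] by blast
  then have "real l * T < k * mixing_time L \<pi>"
    using l(1) by (simp add: field_simps)
  then have "real l * T \<le> t / n"
    using \<open>k * mixing_time L \<pi> \<le> t / n\<close> by linarith
  moreover have "real_of_int \<lfloor>t / (- log 2 q * mixing_time L \<pi>) - 1\<rfloor> = real n - 1"
    using n by (simp add: k_def)
  ultimately show ?thesis
    using that[OF T(1) l(1) l(3) n(2)] by blast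
qed

lemma (in ctmc_invariant) prob_occupation_deviation_le_mixing_time:
  fixes h :: "'a \<Rightarrow> real" and \<delta> \<sigma> t :: real and x y :: 'a
  defines "m \<equiv> pi_mean \<pi> h"
  defines "a \<equiv> \<delta>^2 * m^2 / (6 * \<sigma>^2)" and "q \<equiv> \<delta>^2 * m^2 * pi_min \<pi> / (6 * \<sigma>^2)"
  assumes "x \<noteq> y" and pos: "\<forall>x. 0 < \<pi> x" and mixes: "mixing_set L \<pi> \<noteq> {}"
    and var: "pi_var \<pi> h \<le> \<sigma>^2" and "0 < m" "0 < t" "0 < \<delta>"
    and small: "\<delta> * m * sup_norm h \<le> \<sigma>^2 / 2" and a: "0 < a" "a \<le> 1/12"
    and F: "1 \<le> \<lfloor>t / (- log 2 q * mixing_time L \<pi>) - 1\<rfloor>"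
  shows "prob {\<omega>\<in>space M. integral {0..t} (\<lambda>s. h (X s \<omega>)) - t * m \<ge> \<delta> * t * m}
         \<le> 4 * exp (- real_of_int \<lfloor>t / (- log 2 q * mixing_time L \<pi>) - 1\<rfloor> * a)"
proof -
  have \<pi>: "is_distribution \<pi>" using invariant by (simp add: is_invariant_def)
  have "q = a * pi_min \<pi>" by (simp add: q_def a_def)
  then have "0 < q" "q \<le> a / 2"
    using a pi_min_pos[of \<pi>] pos pi_min_le_half[OF \<pi> \<open>x \<noteq> y\<close>] by (simp_all add: mult_left_le)
  moreover have "q < 1/2"
    using \<open>q \<le> a / 2\<close> a by simp
  ultimately obtain l n T where T: "T \<in> mixing_set L \<pi>" "1 \<le> l" "(1/2) ^ (l + 1) \<le> q"
    and n: "1 \<le> n" "real l * T \<le> t / n"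
    and F_eq: "real_of_int \<lfloor>t / (- log 2 q * mixing_time L \<pi>) - 1\<rfloor> = real n - 1"
    using block_parameters[OF mixes _ _ \<open>0 < t\<close> F] by blast
  have "(1/2) ^ (l + 1) \<le> a / 2"
    using T(3) \<open>q \<le> a / 2\<close> by linarith
  with T n show ?thesis
    unfolding F_eq a_def m_def using var \<open>0 < \<delta>\<close> \<open>0 < m\<close> \<open>0 < t\<close> small
    by (intro prob_occupation_deviation_le) (auto simp: a_def m_def)
qed

theorem mainTheorem19:
  fixes M :: "'w measure" and X :: "real \<Rightarrow> 'w \<Rightarrow> 'a::finite"
    and L :: "'a \<Rightarrow> 'a \<Rightarrow> real" and \<pi> h :: "'a \<Rightarrow> real"
    and \<sigma> t \<delta> :: real
  assumes ctmc: "is_ctmc M X L"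
    and inv: "is_invariant L \<pi>"
    and pos: "\<forall>x. 0 < \<pi> x"
    and mixes: "mixing_set L \<pi> \<noteq> {}"
    and var: "pi_var \<pi> h \<le> \<sigma>^2"
    and mean_pos: "pi_mean \<pi> h > 0"
    and t_pos: "t > 0"
    and delta_pos: "0 < \<delta>"
    and delta_le: "\<delta> \<le> min (\<sigma>^2 / (2 * pi_mean \<pi> h * sup_norm h)) 1"
  shows "measure M {\<omega>\<in>space M.
            integral {0..t} (\<lambda>s. h (X s \<omega>)) - t * pi_mean \<pi> h \<ge> \<delta> * t * pi_mean \<pi> h}
         \<le> 4 * exp (- real_of_int
              \<lfloor>t / ((- log 2 (\<delta>^2 * (pi_mean \<pi> h)^2 * pi_min \<pi> / (6 * \<sigma>^2))) * mixing_time L \<pi>) - 1\<rfloor>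
              * (\<delta>^2 * (pi_mean \<pi> h)^2 / (6 * \<sigma>^2)))"
proof -
  interpret ctmc_invariant M X L \<pi>
    using ctmc inv by (simp add: ctmc_invariant_def ctmc_def ctmc_invariant_axioms_def)
  define E where "E = {\<omega>\<in>space M. integral {0..t} (\<lambda>s. h (X s \<omega>)) - t * pi_mean \<pi> h \<ge> \<delta> * t * pi_mean \<pi> h}"
  define a where "a = \<delta>^2 * (pi_mean \<pi> h)^2 / (6 * \<sigma>^2)"
  define F where "F = \<lfloor>t / ((- log 2 (\<delta>^2 * (pi_mean \<pi> h)^2 * pi_min \<pi> / (6 * \<sigma>^2))) * mixing_time L \<pi>) - 1\<rfloor>"
  have \<pi>: "is_distribution \<pi>" using inv by (simp add: is_invariant_def)
  note par = deviation_parameters[OF \<pi> mean_pos delta_pos delta_le]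
  consider "F \<le> 0" | "\<And>x y :: 'a. x = y" | x y :: 'a where "x \<noteq> y" "1 \<le> F"
    by (cases "F \<le> 0") auto
  then have "prob E \<le> 4 * exp (- real_of_int F * a)"
  proof cases
    case 1
    have "0 < a" using par(2) by (simp add: a_def)
    with 1 have "1 \<le> exp (- real_of_int F * a)"
      by (simp add: mult_nonpos_nonneg)
    then show ?thesis using prob_le_1[of E] by linarith
  next
    case 2
    then have "integral {0..t} (\<lambda>s. h (X s \<omega>)) = t * pi_mean \<pi> h" for \<omega>
      using pi_mean_eq_of_subsingleton[OF \<pi> 2, of h, symmetric] t_pos by simp
    moreover have "0 < \<delta> * t * pi_mean \<pi> h"
      using t_pos delta_pos mean_pos by simp
    ultimately show ?thesis by (simp add: E_def)
  next
    case 3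
    then show ?thesis
      unfolding E_def F_def a_def using pos mixes var mean_pos t_pos delta_pos par
      by (intro prob_occupation_deviation_le_mixing_time)
  qed
  then show ?thesis
    by (simp only: E_def F_def a_def)
qed

end
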